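(* $\widetilde{\mathbb{R}}=\mathbb{R}^{\mathrm{alg}}$, i.e. $\widetilde{\mathbb{R}}$ equals the field of real numbers that are algebraic over $\mathbb{Q}$.
   Context: Let $K$ be a field. For $r\in K$, a finite set $A(r)$ with $\{r\}\subseteq A(r)\subseteq K$ is called adequate for $r$ if every mapping $f:A(r)\to K$ satisfying (1) if $1\in A(r)$ then $f(1)=1$; (2) if $a,b\in A(r)$ and $a+b\in A(r)$ then $f(a+b)=f(a)+f(b)$; (3) if $a,b\in A(r)$ and $a\cdot b\in A(r)$ then $f(a\cdot b)=f(a)\cdot f(b)$, also satisfies $f(r)=r$. $\widetilde{K}$ denotes the set of all $r\in K$ for which some finite set adequate for $r$ exists. $\mathbb{R}^{\mathrm{alg}}$ denotes the field of real algebraic numbers. *)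

theory Defs
  imports Complex_Main "HOL-Computational_Algebra.Polynomial"
begin

definition adequate :: "'a::field set \<Rightarrow> 'a \<Rightarrow> bool" where
  "adequate A r \<longleftrightarrow> finite A \<and> r \<in> A \<and>
     (\<forall>f :: 'a \<Rightarrow> 'a.
        ((1 \<in> A \<longrightarrow> f 1 = 1) \<and>
         (\<forall>a\<in>A. \<forall>b\<in>A. a + b \<in> A \<longrightarrow> f (a + b) = f a + f b) \<and>
         (\<forall>a\<in>A. \<forall>b\<in>A. a * b \<in> A \<longrightarrow> f (a * b) = f a * f b))
        \<longrightarrow> f r = r)"

definition tilde :: "'a::field set" where
  "tilde = {r. \<exists>A. adequate A r}"

end

theory Submission
  imports Defs "HOL-Library.Function_Algebras"
begin

(* If r is algebraic, take an integer polynomial p with p(r) = 0 and integers d, n1, n2 such that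
   r is the only root of p with n1 <= d x <= n2. A finite set containing the integers up to some
   bound, the partial sums of p(r), and square roots of d r - n1 and n2 - d r forces every partial
   homomorphism f to satisfy p(f r) = 0 and n1 <= d f(r) <= n2, hence f r = r.

   If r is transcendental, list a finite set A as the coordinates of a point a with a_0 = r. By
   induction on n, every finite system of integer polynomial equations in the first n coordinates
   that a satisfies has solutions b arbitrarily close to a with b_0 <> a_0. When the coordinate
   a_n is adjoined, either it satisfies no nontrivial polynomial relation over the earlier
   coordinates, and may be kept fixed (or moved freely if n = 0), or it is a simple root of a
   minimal such polynomial m: pseudo-division by m reduces the system to equations in the earlier
   coordinates, and by the intermediate value theorem m keeps a root near a_n under small
   perturbations of its coefficients. Applied to the relations a_i + a_j = a_k, a_i a_j = a_k and
   a_i = 1 holding in A, a solution b gives a partial homomorphism a_i |-> b_i that moves r. *)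

section \<open>Partial homomorphisms and algebraic numbers\<close>

definition partial_hom :: "'a::field set \<Rightarrow> ('a \<Rightarrow> 'a) \<Rightarrow> bool" where
  "partial_hom A f \<longleftrightarrow> (1 \<in> A \<longrightarrow> f 1 = 1) \<and>
     (\<forall>a\<in>A. \<forall>b\<in>A. a + b \<in> A \<longrightarrow> f (a + b) = f a + f b) \<and>
     (\<forall>a\<in>A. \<forall>b\<in>A. a * b \<in> A \<longrightarrow> f (a * b) = f a * f b)"

lemma adequate_iff_partial_hom:
  "adequate A r \<longleftrightarrow> finite A \<and> r \<in> A \<and> (\<forall>f. partial_hom A f \<longrightarrow> f r = r)"
  by (simp add: adequate_def partial_hom_def)

lemma
  assumes "partial_hom A f"
  shows partial_hom_one: "1 \<in> A \<Longrightarrow> f 1 = 1"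
    and partial_hom_add: "a \<in> A \<Longrightarrow> b \<in> A \<Longrightarrow> a + b \<in> A \<Longrightarrow> f (a + b) = f a + f b"
    and partial_hom_mult: "a \<in> A \<Longrightarrow> b \<in> A \<Longrightarrow> a * b \<in> A \<Longrightarrow> f (a * b) = f a * f b"
  using assms by (auto simp: partial_hom_def)

lemma partial_hom_zero:
  assumes "partial_hom A f" "0 \<in> A"
  shows "f 0 = 0"
  using partial_hom_add[OF assms(1), of 0 0] assms(2) by (metis add_0 add_cancel_right_right)

lemma partial_hom_of_int:
  assumes f: "partial_hom A f" and ints: "of_int ` {-K..K} \<subseteq> A" and k: "\<bar>k\<bar> \<le> K"
  shows "f (of_int k) = of_int k"
proof -
  have int_in_A: "of_int j \<in> A" if "\<bar>j\<bar> \<le> K" for j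
    using that by (intro subsetD[OF ints] imageI) (simp add: abs_le_iff)
  have f0: "f 0 = 0"
    using partial_hom_zero[OF f] int_in_A[of 0] k by simp
  have f_nat: "f (of_nat j) = of_nat j" if "int j \<le> K" for j
    using that
  proof (induction j)
    case (Suc j)
    have "f (of_nat j + 1) = f (of_nat j) + f 1"
      using Suc.prems int_in_A[of "int j"] int_in_A[of 1] int_in_A[of "int (Suc j)"]
      by (intro partial_hom_add[OF f]) (simp_all add: add.commute)
    moreover have "f 1 = 1"
      using Suc.prems int_in_A[of 1] by (intro partial_hom_one[OF f]) simp
    ultimately show ?case
      using Suc by (simp add: add.commute)
  qed (simp add: f0)
  show ?thesis
  proof (cases "0 \<le> k")
    case True
    then show ?thesis
      using f_nat[of "nat k"] k by simp
  next
    case False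
    have "f (of_int k + of_int (- k)) = f (of_int k) + f (of_int (- k))"
      using k int_in_A[of k] int_in_A[of "- k"] int_in_A[of 0] by (intro partial_hom_add[OF f]) simp_all
    moreover have "f (of_int (- k)) = of_int (- k)"
      using f_nat[of "nat (- k)"] k False by simp
    ultimately show ?thesis
      using f0 by simp
  qed
qed

lemma partial_hom_power:
  assumes f: "partial_hom A f" and "x \<in> A" and pow_in_A: "\<And>i. i \<le> k \<Longrightarrow> x ^ i \<in> A"
  shows "f (x ^ k) = f x ^ k"
  using pow_in_A
proof (induction k)
  case 0
  then show ?case
    using partial_hom_one[OF f] by simp
next
  case (Suc k)
  then have "f (x ^ k * x) = f (x ^ k) * f x"
    using \<open>x \<in> A\<close> Suc.prems[of k] Suc.prems[of "Suc k"]
    by (intro partial_hom_mult[OF f]) (simp_all add: mult.commute)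
  then show ?case
    using Suc by (simp add: mult.commute)
qed

definition poly_eval_steps :: "'a::comm_semiring_1 poly \<Rightarrow> 'a \<Rightarrow> 'a set" where
  "poly_eval_steps p x =
     (\<lambda>i. x ^ i) ` {..degree p} \<union> (\<lambda>i. coeff p i * x ^ i) ` {..degree p} \<union>
     (\<lambda>j. \<Sum>i<j. coeff p i * x ^ i) ` {..Suc (degree p)}"

lemma partial_hom_poly:
  assumes f: "partial_hom A f" and x: "x \<in> A" and steps: "poly_eval_steps p x \<subseteq> A"
    and coeffs: "\<And>i. i \<le> degree p \<Longrightarrow> coeff p i \<in> A \<and> f (coeff p i) = coeff p i"
  shows "f (poly p x) = poly p (f x)"
proof -
  have pow_in_A: "x ^ i \<in> A" and term_in_A: "coeff p i * x ^ i \<in> A" if "i \<le> degree p" for i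
    using that steps by (auto simp: poly_eval_steps_def)
  have sum_in_A: "(\<Sum>i<j. coeff p i * x ^ i) \<in> A" if "j \<le> Suc (degree p)" for j
    using that steps by (auto simp: poly_eval_steps_def)
  have f_pow: "f (x ^ i) = f x ^ i" if "i \<le> degree p" for i
    using that pow_in_A by (intro partial_hom_power[OF f x]) auto
  have f_sum: "f (\<Sum>i<j. coeff p i * x ^ i) = (\<Sum>i<j. coeff p i * f x ^ i)" if "j \<le> Suc (degree p)" for j
    using that
  proof (induction j)
    case 0
    then show ?case
      using partial_hom_zero[OF f] sum_in_A[of 0] by simp
  next
    case (Suc j)
    have "f (\<Sum>i<Suc j. coeff p i * x ^ i) = f ((\<Sum>i<j. coeff p i * x ^ i) + coeff p j * x ^ j)"
      by simp
    also have "\<dots> = f (\<Sum>i<j. coeff p i * x ^ i) + f (coeff p j * x ^ j)"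
      using Suc.prems sum_in_A[of j] sum_in_A[of "Suc j"] term_in_A[of j]
      by (intro partial_hom_add[OF f]) simp_all
    also have "f (coeff p j * x ^ j) = coeff p j * f x ^ j"
      using Suc.prems coeffs[of j] pow_in_A[of j] term_in_A[of j] f_pow[of j]
      by (subst partial_hom_mult[OF f]) simp_all
    finally show ?case
      using Suc by simp
  qed
  show ?thesis
    using f_sum[of "Suc (degree p)"] by (simp add: poly_altdef lessThan_Suc_atMost)
qed

lemma partial_hom_le_add_square:
  fixes f :: "'a::linordered_field \<Rightarrow> 'a"
  assumes "partial_hom A f" "t \<in> A" "t * t \<in> A" "u \<in> A" "t * t + u \<in> A"
  shows "f u \<le> f (t * t + u)"
  using assms by (simp add: partial_hom_add partial_hom_mult)

lemma isolate_root_by_fractions: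
  fixes p :: "real poly" and r :: real
  assumes "p \<noteq> 0"
  obtains d n\<^sub>1 n\<^sub>2 :: int where "n\<^sub>1 < d * r" "d * r < n\<^sub>2"
    "\<And>x::real. poly p x = 0 \<Longrightarrow> n\<^sub>1 \<le> d * x \<Longrightarrow> d * x \<le> n\<^sub>2 \<Longrightarrow> x = r"
proof -
  define R where "R = {x. poly p x = 0} - {r}"
  have "finite R"
    using poly_roots_finite[OF assms] by (simp add: R_def)
  define \<delta> where "\<delta> = Min (insert 1 ((\<lambda>x. \<bar>x - r\<bar>) ` R))"
  have "0 < \<delta>"
    using \<open>finite R\<close> by (auto simp: \<delta>_def R_def)
  have \<delta>_le: "\<delta> \<le> \<bar>x - r\<bar>" if "x \<in> R" for x
    using \<open>finite R\<close> that by (simp add: \<delta>_def)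
  obtain k where k: "inverse (real (Suc k)) < \<delta>"
    using reals_Archimedean[OF \<open>0 < \<delta>\<close>] by blast
  define d where "d = int (Suc k)"
  define n\<^sub>1 where "n\<^sub>1 = \<lceil>d * r\<rceil> - 1"
  define n\<^sub>2 where "n\<^sub>2 = \<lfloor>d * r\<rfloor> + 1"
  have "n\<^sub>1 < d * r" "d * r < n\<^sub>2"
    by (simp_all add: n\<^sub>1_def n\<^sub>2_def) linarith+
  moreover have "x = r" if "poly p x = 0" "n\<^sub>1 \<le> d * x" "d * x \<le> n\<^sub>2" for x :: real
  proof (rule ccontr)
    assume "x \<noteq> r"
    then have "\<delta> \<le> \<bar>x - r\<bar>"
      using that by (intro \<delta>_le) (simp add: R_def)
    moreover have "\<bar>d * (x - r)\<bar> \<le> 1"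
      using that by (simp add: n\<^sub>1_def n\<^sub>2_def right_diff_distrib) linarith
    then have "real (Suc k) * \<bar>x - r\<bar> \<le> 1"
      by (simp only: d_def abs_mult)
    then have "\<bar>x - r\<bar> \<le> inverse (real (Suc k))"
      by (simp add: inverse_eq_divide pos_le_divide_eq mult.commute)
    ultimately show False
      using k by simp
  qed
  ultimately show thesis
    by (rule that)
qed

definition isolating_set :: "int \<Rightarrow> real poly \<Rightarrow> real \<Rightarrow> int \<Rightarrow> int \<Rightarrow> int \<Rightarrow> real set" where
  "isolating_set K p r d n\<^sub>1 n\<^sub>2 = of_int ` {-K..K} \<union> poly_eval_steps p r \<union>
     {r, d * r, d * r - n\<^sub>1, sqrt (d * r - n\<^sub>1), n\<^sub>2 - d * r, sqrt (n\<^sub>2 - d * r)}"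

lemma partial_hom_isolating_set:
  fixes f :: "real \<Rightarrow> real" and r :: real and K d n\<^sub>1 n\<^sub>2 :: int
  assumes f: "partial_hom (isolating_set K p r d n\<^sub>1 n\<^sub>2) f"
    and coeffs: "\<And>i. i \<le> degree p \<Longrightarrow> coeff p i \<in> of_int ` {-K..K}"
    and K: "\<bar>d\<bar> \<le> K" "\<bar>n\<^sub>1\<bar> \<le> K" "\<bar>n\<^sub>2\<bar> \<le> K"
    and "poly p r = 0" "n\<^sub>1 < d * r" "d * r < n\<^sub>2"
  shows "poly p (f r) = 0" "n\<^sub>1 \<le> of_int d * f r" "of_int d * f r \<le> n\<^sub>2"
proof -
  define A where "A = isolating_set K p r d n\<^sub>1 n\<^sub>2"
  have ints: "of_int ` {-K..K} \<subseteq> A"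
    by (auto simp: A_def isolating_set_def)
  have f_int: "f (of_int k) = of_int k" if "\<bar>k\<bar> \<le> K" for k
    using partial_hom_of_int[OF f[folded A_def] ints that] .
  have int_in_A: "of_int k \<in> A" if "\<bar>k\<bar> \<le> K" for k
    using that by (intro subsetD[OF ints] imageI) (simp add: abs_le_iff)
  have "f (poly p r) = poly p (f r)"
  proof (rule partial_hom_poly[OF f])
    show "r \<in> isolating_set K p r d n\<^sub>1 n\<^sub>2" "poly_eval_steps p r \<subseteq> isolating_set K p r d n\<^sub>1 n\<^sub>2"
      by (auto simp: isolating_set_def)
    show "coeff p i \<in> isolating_set K p r d n\<^sub>1 n\<^sub>2 \<and> f (coeff p i) = coeff p i" if "i \<le> degree p" for i
      using coeffs[OF that] f_int ints by (auto simp: A_def)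
  qed
  then show "poly p (f r) = 0"
    using \<open>poly p r = 0\<close> partial_hom_zero[OF f] int_in_A[of 0] K(1) by (simp add: A_def)
  have f_dr: "f (d * r) = of_int d * f r"
    using partial_hom_mult[OF f, of d r] int_in_A[OF K(1)] f_int[OF K(1)]
    by (simp add: A_def isolating_set_def)
  have "f (of_int n\<^sub>1) \<le> f (sqrt (d * r - n\<^sub>1) * sqrt (d * r - n\<^sub>1) + of_int n\<^sub>1)"
    using \<open>n\<^sub>1 < d * r\<close> int_in_A[OF K(2)]
    by (intro partial_hom_le_add_square[OF f]) (simp_all add: A_def isolating_set_def)
  then show "n\<^sub>1 \<le> of_int d * f r"
    using \<open>n\<^sub>1 < d * r\<close> f_int[OF K(2)] f_dr by simp
  have "f (d * r) \<le> f (sqrt (n\<^sub>2 - d * r) * sqrt (n\<^sub>2 - d * r) + d * r)"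
    using \<open>d * r < n\<^sub>2\<close> int_in_A[OF K(3)]
    by (intro partial_hom_le_add_square[OF f]) (simp_all add: A_def isolating_set_def)
  then show "of_int d * f r \<le> n\<^sub>2"
    using \<open>d * r < n\<^sub>2\<close> f_int[OF K(3)] f_dr by simp
qed

lemma algebraic_imp_adequate:
  fixes r :: real
  assumes "algebraic r"
  shows "\<exists>A. adequate A r"
proof -
  obtain p where p_int: "\<And>i. coeff p i \<in> \<int>" and "p \<noteq> 0" and "poly p r = 0"
    using algebraicE[OF assms] by metis
  obtain d n\<^sub>1 n\<^sub>2 :: int where bounds: "n\<^sub>1 < d * r" "d * r < n\<^sub>2"
    and isolated: "\<And>x::real. poly p x = 0 \<Longrightarrow> n\<^sub>1 \<le> d * x \<Longrightarrow> d * x \<le> n\<^sub>2 \<Longrightarrow> x = r"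
    by (rule isolate_root_by_fractions[OF \<open>p \<noteq> 0\<close>, of r]) blast
  define S where "S = {d, n\<^sub>1, n\<^sub>2} \<union> (\<lambda>i. \<lfloor>coeff p i\<rfloor>) ` {..degree p}"
  define K where "K = Max (abs ` S)"
  have K: "\<bar>k\<bar> \<le> K" if "k \<in> S" for k
    unfolding K_def using that by (intro Max_ge) (auto simp: S_def)
  then have K_d_n: "\<bar>d\<bar> \<le> K" "\<bar>n\<^sub>1\<bar> \<le> K" "\<bar>n\<^sub>2\<bar> \<le> K"
    by (simp_all add: S_def)
  have coeffs: "coeff p i \<in> of_int ` {-K..K}" if "i \<le> degree p" for i
  proof -
    have "coeff p i = of_int \<lfloor>coeff p i\<rfloor>"
      using p_int[of i] by simp
    moreover have "\<bar>\<lfloor>coeff p i\<rfloor>\<bar> \<le> K"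
      using that by (intro K) (simp add: S_def)
    ultimately show ?thesis
      by (simp add: abs_le_iff)
  qed
  have "f r = r" if "partial_hom (isolating_set K p r d n\<^sub>1 n\<^sub>2) f" for f
    using partial_hom_isolating_set[OF that coeffs K_d_n \<open>poly p r = 0\<close> bounds] isolated by blast
  moreover have "finite (isolating_set K p r d n\<^sub>1 n\<^sub>2)" "r \<in> isolating_set K p r d n\<^sub>1 n\<^sub>2"
    by (simp_all add: isolating_set_def poly_eval_steps_def)
  ultimately show ?thesis
    unfolding adequate_iff_partial_hom by blast
qed

section \<open>Polynomial functions with integer coefficients\<close>

type_synonym point = "nat \<Rightarrow> real"

definition coord_nhds :: "nat \<Rightarrow> point \<Rightarrow> point filter" where
  "coord_nhds n a = (INF \<delta>\<in>{0<..}. principal {b. \<forall>i<n. \<bar>b i - a i\<bar> < \<delta>})"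

lemma eventually_coord_nhds:
  "eventually P (coord_nhds n a) \<longleftrightarrow> (\<exists>\<delta>>0. \<forall>b. (\<forall>i<n. \<bar>b i - a i\<bar> < \<delta>) \<longrightarrow> P b)"
  unfolding coord_nhds_def
proof (subst eventually_INF_base)
  show "\<exists>\<gamma>\<in>{0<..}. principal {b. \<forall>i<n. \<bar>b i - a i\<bar> < \<gamma>} \<le>
      inf (principal {b. \<forall>i<n. \<bar>b i - a i\<bar> < \<delta>}) (principal {b. \<forall>i<n. \<bar>b i - a i\<bar> < \<epsilon>})"
    if "\<delta> \<in> {0<..}" "\<epsilon> \<in> {0<..}" for \<delta> \<epsilon> :: real
    using that by (intro bexI[of _ "min \<delta> \<epsilon>"]) auto
qed (auto simp: eventually_principal)

lemma frequently_coord_nhds: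
  "frequently P (coord_nhds n a) \<longleftrightarrow> (\<forall>\<delta>>0. \<exists>b. (\<forall>i<n. \<bar>b i - a i\<bar> < \<delta>) \<and> P b)"
  unfolding frequently_def eventually_coord_nhds by blast

inductive_set int_polyfun :: "nat \<Rightarrow> (point \<Rightarrow> real) set" for n :: nat where
  int_polyfun_const: "(\<lambda>x. of_int c) \<in> int_polyfun n"
| int_polyfun_coord: "i < n \<Longrightarrow> (\<lambda>x. x i) \<in> int_polyfun n"
| int_polyfun_add: "f \<in> int_polyfun n \<Longrightarrow> g \<in> int_polyfun n \<Longrightarrow> (\<lambda>x. f x + g x) \<in> int_polyfun n"
| int_polyfun_mult: "f \<in> int_polyfun n \<Longrightarrow> g \<in> int_polyfun n \<Longrightarrow> (\<lambda>x. f x * g x) \<in> int_polyfun n"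

lemma int_polyfun_diff:
  assumes "f \<in> int_polyfun n" "g \<in> int_polyfun n"
  shows "(\<lambda>x. f x - g x) \<in> int_polyfun n"
proof -
  have "(\<lambda>x. f x + (\<lambda>x. of_int (- 1)) x * g x) \<in> int_polyfun n"
    using assms by (intro int_polyfun.intros)
  then show ?thesis
    by simp
qed

lemma int_polyfun_of_nat [simp]: "of_nat k \<in> int_polyfun n"
  using int_polyfun_const[of "int k"] by (simp add: of_nat_fun)

lemma int_polyfun_zero [simp]: "0 \<in> int_polyfun n"
  using int_polyfun_of_nat[of 0] by simp

lemma int_polyfun_plus [intro]: "f \<in> int_polyfun n \<Longrightarrow> g \<in> int_polyfun n \<Longrightarrow> f + g \<in> int_polyfun n"
  using int_polyfun_add by (simp add: plus_fun_def)

lemma int_polyfun_minus [intro]: "f \<in> int_polyfun n \<Longrightarrow> g \<in> int_polyfun n \<Longrightarrow> f - g \<in> int_polyfun n"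
  using int_polyfun_diff by (simp add: fun_diff_def)

lemma int_polyfun_times [intro]: "f \<in> int_polyfun n \<Longrightarrow> g \<in> int_polyfun n \<Longrightarrow> f * g \<in> int_polyfun n"
  using int_polyfun_mult by (simp add: times_fun_def)

lemma int_polyfun_sum [intro]: "(\<And>i. i \<in> S \<Longrightarrow> h i \<in> int_polyfun n) \<Longrightarrow> sum h S \<in> int_polyfun n"
  by (induction S rule: infinite_finite_induct) auto

lemma int_polyfun_0_Ints: "f \<in> int_polyfun 0 \<Longrightarrow> f x \<in> \<int>"
  by (induction rule: int_polyfun.induct) auto

lemma tendsto_int_polyfun: "f \<in> int_polyfun n \<Longrightarrow> (f \<longlongrightarrow> f a) (coord_nhds n a)"
proof (induction rule: int_polyfun.induct)
  case (int_polyfun_coord i)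
  show ?case
  proof (rule tendstoI)
    show "eventually (\<lambda>b. dist (b i) (a i) < \<epsilon>) (coord_nhds n a)" if "0 < \<epsilon>" for \<epsilon>
      using that int_polyfun_coord by (auto simp: eventually_coord_nhds dist_real_def)
  qed
qed (auto intro: tendsto_intros)

definition int_polyfun_poly :: "nat \<Rightarrow> (point \<Rightarrow> real) poly set" where
  "int_polyfun_poly n = {p. \<forall>i. coeff p i \<in> int_polyfun n}"

lemma int_polyfun_poly_coeff: "p \<in> int_polyfun_poly n \<Longrightarrow> coeff p i \<in> int_polyfun n"
  by (simp add: int_polyfun_poly_def)

lemma int_polyfun_poly_0 [simp]: "0 \<in> int_polyfun_poly n"
  by (simp add: int_polyfun_poly_def)

lemma pCons_in_int_polyfun_poly_iff [simp]:
  "pCons c p \<in> int_polyfun_poly n \<longleftrightarrow> c \<in> int_polyfun n \<and> p \<in> int_polyfun_poly n"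
  by (auto simp: int_polyfun_poly_def coeff_pCons split: nat.splits)

lemma int_polyfun_poly_add [intro]:
  "p \<in> int_polyfun_poly n \<Longrightarrow> q \<in> int_polyfun_poly n \<Longrightarrow> p + q \<in> int_polyfun_poly n"
  by (auto simp: int_polyfun_poly_def)

lemma int_polyfun_poly_diff [intro]:
  "p \<in> int_polyfun_poly n \<Longrightarrow> q \<in> int_polyfun_poly n \<Longrightarrow> p - q \<in> int_polyfun_poly n"
  by (auto simp: int_polyfun_poly_def)

lemma int_polyfun_poly_mult [intro]:
  "p \<in> int_polyfun_poly n \<Longrightarrow> q \<in> int_polyfun_poly n \<Longrightarrow> p * q \<in> int_polyfun_poly n"
  by (auto simp: int_polyfun_poly_def coeff_mult)

lemma int_polyfun_poly_smult [intro]: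
  "c \<in> int_polyfun n \<Longrightarrow> p \<in> int_polyfun_poly n \<Longrightarrow> smult c p \<in> int_polyfun_poly n"
  by (auto simp: int_polyfun_poly_def)

lemma int_polyfun_poly_monom [intro]: "c \<in> int_polyfun n \<Longrightarrow> monom c k \<in> int_polyfun_poly n"
  by (auto simp: int_polyfun_poly_def coeff_monom)

definition eval_coeffs :: "point \<Rightarrow> (point \<Rightarrow> real) poly \<Rightarrow> real poly" where
  "eval_coeffs x p = map_poly (\<lambda>c. c x) p"

lemma coeff_eval_coeffs [simp]: "coeff (eval_coeffs x p) i = coeff p i x"
  by (simp add: eval_coeffs_def coeff_map_poly)

lemma eval_coeffs_0 [simp]: "eval_coeffs x 0 = 0"
  by (simp add: eval_coeffs_def)

lemma eval_coeffs_pCons [simp]: "eval_coeffs x (pCons c p) = pCons (c x) (eval_coeffs x p)"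
  by (simp add: eval_coeffs_def map_poly_pCons)

lemma eval_coeffs_add [simp]: "eval_coeffs x (p + q) = eval_coeffs x p + eval_coeffs x q"
  by (rule poly_eqI) simp

lemma eval_coeffs_diff [simp]: "eval_coeffs x (p - q) = eval_coeffs x p - eval_coeffs x q"
  by (rule poly_eqI) simp

lemma eval_coeffs_smult [simp]: "eval_coeffs x (smult c p) = smult (c x) (eval_coeffs x p)"
  by (rule poly_eqI) simp

lemma eval_coeffs_mult [simp]: "eval_coeffs x (p * q) = eval_coeffs x p * eval_coeffs x q"
  by (induction p) simp_all

lemma eval_coeffs_monom [simp]: "eval_coeffs x (monom c k) = monom (c x) k"
  by (rule poly_eqI) (simp add: coeff_monom)

lemma int_polyfun_poly_pderiv:
  assumes "p \<in> int_polyfun_poly n" "0 < degree p"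
  obtains p' where "p' \<in> int_polyfun_poly n" "degree p' < degree p"
    "\<And>x. eval_coeffs x p' = pderiv (eval_coeffs x p)"
proof
  define p' where "p' = (\<Sum>i<degree p. monom (of_nat (Suc i) * coeff p (Suc i)) i)"
  have coeff_p': "coeff p' i = of_nat (Suc i) * coeff p (Suc i)" for i
    by (cases "i < degree p") (auto simp: p'_def coeff_sum coeff_monom coeff_eq_0)
  show "p' \<in> int_polyfun_poly n"
    using assms(1) by (auto simp: int_polyfun_poly_def coeff_p' simp del: of_nat_Suc)
  have "degree p' \<le> degree p - 1"
    by (rule degree_le) (auto simp: coeff_p' coeff_eq_0)
  then show "degree p' < degree p"
    using assms(2) by linarith
  show "eval_coeffs x p' = pderiv (eval_coeffs x p)" for x
    by (rule poly_eqI) (simp add: coeff_p' coeff_pderiv del: of_nat_Suc)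
qed

lemma tendsto_poly_eval_coeffs:
  "p \<in> int_polyfun_poly n \<Longrightarrow> ((\<lambda>b. poly (eval_coeffs b p) t) \<longlongrightarrow> poly (eval_coeffs a p) t) (coord_nhds n a)"
  by (induction p) (auto intro!: tendsto_add[OF tendsto_int_polyfun] tendsto_mult_left)

lemma int_polyfun_Suc_decomp:
  "f \<in> int_polyfun (Suc n) \<Longrightarrow>
     \<exists>p. p \<in> int_polyfun_poly n \<and> (\<forall>x t. f (x(n := t)) = poly (eval_coeffs x p) t)"
proof (induction rule: int_polyfun.induct)
  case (int_polyfun_const c)
  show ?case
    by (intro exI[of _ "[:\<lambda>x. of_int c:]"]) (auto intro: int_polyfun.intros)
next
  case (int_polyfun_coord i)
  show ?case
  proof (cases "i = n")
    case True
    then show ?thesis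
      by (intro exI[of _ "[:0, 1:]"]) (auto simp: one_fun_def intro: int_polyfun_const[of 1, simplified])
  next
    case False
    with int_polyfun_coord show ?thesis
      by (intro exI[of _ "[:\<lambda>x. x i:]"]) (auto intro: int_polyfun.intros)
  qed
next
  case (int_polyfun_add f g)
  then obtain p q where "p \<in> int_polyfun_poly n" "q \<in> int_polyfun_poly n"
    "\<forall>x t. f (x(n := t)) = poly (eval_coeffs x p) t" "\<forall>x t. g (x(n := t)) = poly (eval_coeffs x q) t"
    by blast
  then show ?case
    by (intro exI[of _ "p + q"]) (simp_all add: int_polyfun_poly_add fun_upd_def)
next
  case (int_polyfun_mult f g)
  then obtain p q where "p \<in> int_polyfun_poly n" "q \<in> int_polyfun_poly n"
    "\<forall>x t. f (x(n := t)) = poly (eval_coeffs x p) t" "\<forall>x t. g (x(n := t)) = poly (eval_coeffs x q) t"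
    by blast
  then show ?case
    by (intro exI[of _ "p * q"]) (simp_all add: int_polyfun_poly_mult fun_upd_def)
qed

lemma power_fun_apply [simp]: "(f ^ k) x = f x ^ k"
  by (induction k) auto

lemma pseudo_remainder_int_polyfun_poly:
  assumes "p \<in> int_polyfun_poly n" "m \<in> int_polyfun_poly n" "0 < degree m"
  defines "r \<equiv> snd (pseudo_divmod p m)"
  shows "r \<in> int_polyfun_poly n" "degree r < degree m"
    and "poly (eval_coeffs x m) t = 0 \<Longrightarrow>
      coeff m (degree m) x ^ (Suc (degree p) - degree m) * poly (eval_coeffs x p) t = poly (eval_coeffs x r) t"
proof -
  obtain q where qr: "pseudo_divmod p m = (q, r)"
    by (metis r_def prod.collapse)
  have "m \<noteq> 0"
    using assms(3) by auto
  have "r' \<in> int_polyfun_poly n"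
    if "pseudo_divmod_main lc q r d dr k = (q', r')" "lc \<in> int_polyfun n"
      "q \<in> int_polyfun_poly n" "r \<in> int_polyfun_poly n" "d \<in> int_polyfun_poly n"
    for lc q r d dr k q' r'
    using that
  proof (induction k arbitrary: q r dr)
    case (Suc k)
    then show ?case
      by (auto simp: Let_def intro!: Suc.IH int_polyfun_poly_coeff)
  qed simp
  then show "r \<in> int_polyfun_poly n"
    using qr assms(1,2) \<open>m \<noteq> 0\<close> by (auto simp: pseudo_divmod_def int_polyfun_poly_coeff)
  show "degree r < degree m"
    using pseudo_divmod(2)[OF \<open>m \<noteq> 0\<close> qr] assms(3) by auto
  assume "poly (eval_coeffs x m) t = 0"
  moreover have "smult (coeff m (degree m) ^ (Suc (degree p) - degree m)) p = m * q + r"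
    using pseudo_divmod(1)[OF \<open>m \<noteq> 0\<close> qr] .
  then have "poly (eval_coeffs x (smult (coeff m (degree m) ^ (Suc (degree p) - degree m)) p)) t =
      poly (eval_coeffs x (m * q + r)) t"
    by simp
  ultimately show "coeff m (degree m) x ^ (Suc (degree p) - degree m) * poly (eval_coeffs x p) t =
      poly (eval_coeffs x r) t"
    by simp
qed

section \<open>Simple roots\<close>

lemma pderiv_nonzero_at_minimal_root:
  assumes "m \<in> int_polyfun_poly n" "0 < degree m" "degree (eval_coeffs a m) = degree m"
    and minimal: "\<And>q. q \<in> int_polyfun_poly n \<Longrightarrow> poly (eval_coeffs a q) \<alpha> = 0 \<Longrightarrow>
      degree q < degree m \<Longrightarrow> eval_coeffs a q = 0"
  shows "poly (pderiv (eval_coeffs a m)) \<alpha> \<noteq> 0"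
proof
  assume "poly (pderiv (eval_coeffs a m)) \<alpha> = 0"
  obtain m' where "m' \<in> int_polyfun_poly n" "degree m' < degree m"
    and "eval_coeffs a m' = pderiv (eval_coeffs a m)"
    using int_polyfun_poly_pderiv[OF assms(1,2)] by metis
  then have "pderiv (eval_coeffs a m) = 0"
    using minimal \<open>poly (pderiv (eval_coeffs a m)) \<alpha> = 0\<close> by metis
  with assms(2,3) show False
    by (simp add: pderiv_eq_0_iff)
qed

lemma minimal_vanishing_poly:
  assumes "p \<in> int_polyfun_poly n" "eval_coeffs a p \<noteq> 0" "poly (eval_coeffs a p) \<alpha> = 0"
  obtains m where "m \<in> int_polyfun_poly n" "0 < degree m" "coeff m (degree m) a \<noteq> 0"
    "poly (eval_coeffs a m) \<alpha> = 0" "poly (pderiv (eval_coeffs a m)) \<alpha> \<noteq> 0"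
    "\<And>q. q \<in> int_polyfun_poly n \<Longrightarrow> poly (eval_coeffs a q) \<alpha> = 0 \<Longrightarrow> degree q < degree m \<Longrightarrow>
       eval_coeffs a q = 0"
proof -
  define Q where "Q q \<longleftrightarrow> q \<in> int_polyfun_poly n \<and> eval_coeffs a q \<noteq> 0 \<and> poly (eval_coeffs a q) \<alpha> = 0"
    for q
  obtain m where "Q m" and least: "\<And>q. Q q \<Longrightarrow> degree m \<le> degree q"
    using ex_has_least_nat[of Q p degree] assms by (auto simp: Q_def)
  then have m: "m \<in> int_polyfun_poly n" "eval_coeffs a m \<noteq> 0" "poly (eval_coeffs a m) \<alpha> = 0"
    by (simp_all add: Q_def)
  have minimal: "eval_coeffs a q = 0"
    if "q \<in> int_polyfun_poly n" "poly (eval_coeffs a q) \<alpha> = 0" "degree q < degree m" for q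
    using that least[of q] by (auto simp: Q_def)
  have lead: "coeff m (degree m) a \<noteq> 0"
  proof
    assume "coeff m (degree m) a = 0"
    define m' where "m' = m - monom (coeff m (degree m)) (degree m)"
    have "Q m'"
      using m \<open>coeff m (degree m) a = 0\<close> by (auto simp: Q_def m'_def intro: int_polyfun_poly_coeff)
    have "coeff m' i = 0" if "degree m \<le> i" for i
      using that by (auto simp: m'_def coeff_monom coeff_eq_0)
    then have "m' = 0"
      using least[OF \<open>Q m'\<close>] leading_coeff_0_iff by blast
    with \<open>Q m'\<close> show False
      by (simp add: Q_def)
  qed
  have "degree (eval_coeffs a m) = degree m"
    using lead by (intro antisym degree_le le_degree) (auto simp: coeff_eq_0)
  moreover have "0 < degree m"
    using poly_zero[OF m(3)] m(2) \<open>degree (eval_coeffs a m) = degree m\<close> by simp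
  ultimately show thesis
    using that m(1,3) lead minimal pderiv_nonzero_at_minimal_root[OF m(1) _ _ minimal] by blast
qed

lemma poly_sign_change_at_simple_root:
  fixes P :: "real poly"
  assumes "poly P \<alpha> = 0" "poly (pderiv P) \<alpha> \<noteq> 0" "0 < \<epsilon>"
  obtains h where "0 < h" "h < \<epsilon>" "poly P (\<alpha> - h) * poly P (\<alpha> + h) < 0"
proof -
  have "\<exists>h>0. h < \<epsilon> \<and> poly P (\<alpha> - h) * poly P (\<alpha> + h) < 0"
    if root: "poly P \<alpha> = 0" and deriv_pos: "0 < poly (pderiv P) \<alpha>" for P
  proof -
    obtain d\<^sub>1 where "0 < d\<^sub>1" and right: "\<And>h. 0 < h \<Longrightarrow> h < d\<^sub>1 \<Longrightarrow> poly P \<alpha> < poly P (\<alpha> + h)"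
      using DERIV_pos_inc_right[OF poly_DERIV deriv_pos] by blast
    obtain d\<^sub>2 where "0 < d\<^sub>2" and left: "\<And>h. 0 < h \<Longrightarrow> h < d\<^sub>2 \<Longrightarrow> poly P (\<alpha> - h) < poly P \<alpha>"
      using DERIV_pos_inc_left[OF poly_DERIV deriv_pos] by blast
    define h where "h = min (min d\<^sub>1 d\<^sub>2) \<epsilon> / 2"
    have "0 < h" "h < d\<^sub>1" "h < d\<^sub>2" "h < \<epsilon>"
      using \<open>0 < d\<^sub>1\<close> \<open>0 < d\<^sub>2\<close> \<open>0 < \<epsilon>\<close> by (auto simp: h_def)
    then show ?thesis
      using left right root by (intro exI[of _ h]) (simp add: mult_neg_pos)
  qed
  from this[of P] this[of "- P"] assms show thesis
    using that by (cases "0 < poly (pderiv P) \<alpha>") (auto simp: pderiv_minus)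
qed

lemma eventually_root_near_simple_root:
  assumes "m \<in> int_polyfun_poly n" "poly (eval_coeffs a m) \<alpha> = 0"
    "poly (pderiv (eval_coeffs a m)) \<alpha> \<noteq> 0" "0 < \<epsilon>"
  shows "\<forall>\<^sub>F b in coord_nhds n a. \<exists>\<beta>. \<bar>\<beta> - \<alpha>\<bar> < \<epsilon> \<and> poly (eval_coeffs b m) \<beta> = 0"
proof -
  obtain h where "0 < h" "h < \<epsilon>"
    and sign_change: "poly (eval_coeffs a m) (\<alpha> - h) * poly (eval_coeffs a m) (\<alpha> + h) < 0"
    using poly_sign_change_at_simple_root[OF assms(2-4)] by blast
  have "((\<lambda>b. poly (eval_coeffs b m) (\<alpha> - h) * poly (eval_coeffs b m) (\<alpha> + h)) \<longlongrightarrow>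
      poly (eval_coeffs a m) (\<alpha> - h) * poly (eval_coeffs a m) (\<alpha> + h)) (coord_nhds n a)"
    using assms(1) by (intro tendsto_mult tendsto_poly_eval_coeffs)
  then have "\<forall>\<^sub>F b in coord_nhds n a. poly (eval_coeffs b m) (\<alpha> - h) * poly (eval_coeffs b m) (\<alpha> + h) < 0"
    using sign_change by (rule order_tendstoD(2))
  then show ?thesis
  proof (rule eventually_mono)
    fix b assume "poly (eval_coeffs b m) (\<alpha> - h) * poly (eval_coeffs b m) (\<alpha> + h) < 0"
    then obtain \<beta> where "\<alpha> - h < \<beta>" "\<beta> < \<alpha> + h" "poly (eval_coeffs b m) \<beta> = 0"
      using poly_IVT[of "\<alpha> - h" "\<alpha> + h"] \<open>0 < h\<close> by auto
    then show "\<exists>\<beta>. \<bar>\<beta> - \<alpha>\<bar> < \<epsilon> \<and> poly (eval_coeffs b m) \<beta> = 0"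
      using \<open>h < \<epsilon>\<close> by (intro exI[of _ \<beta>]) auto
  qed
qed

section \<open>Deforming solutions of integer polynomial systems\<close>

definition deformable :: "nat \<Rightarrow> point \<Rightarrow> bool" where
  "deformable n a \<longleftrightarrow> (\<forall>Z. finite Z \<longrightarrow> Z \<subseteq> int_polyfun n \<longrightarrow> (\<forall>f\<in>Z. f a = 0) \<longrightarrow>
     (\<exists>\<^sub>F b in coord_nhds n a. (\<forall>f\<in>Z. f b = 0) \<and> (0 < n \<longrightarrow> b 0 \<noteq> a 0)))"

lemma deformable_0: "deformable 0 a"
  by (auto simp: deformable_def frequently_coord_nhds)

lemma deformable_eval_coeffs:
  assumes "deformable n a" "finite F" "F \<subseteq> int_polyfun_poly n" "\<And>p. p \<in> F \<Longrightarrow> eval_coeffs a p = 0"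
  shows "\<exists>\<^sub>F b in coord_nhds n a. (\<forall>p\<in>F. eval_coeffs b p = 0) \<and> (0 < n \<longrightarrow> b 0 \<noteq> a 0)"
proof -
  define Z where "Z = (\<Union>p\<in>F. coeff p ` {..degree p})"
  have "finite Z"
    using assms(2) by (simp add: Z_def)
  moreover have "Z \<subseteq> int_polyfun n"
    using assms(3) by (auto simp: Z_def int_polyfun_poly_coeff)
  moreover have "\<forall>f\<in>Z. f a = 0"
    using assms(4) by (auto simp: Z_def simp flip: coeff_eval_coeffs)
  ultimately have "\<exists>\<^sub>F b in coord_nhds n a. (\<forall>f\<in>Z. f b = 0) \<and> (0 < n \<longrightarrow> b 0 \<noteq> a 0)"
    using assms(1) by (simp add: deformable_def)
  moreover have "eval_coeffs b p = 0" if "\<forall>f\<in>Z. f b = 0" "p \<in> F" for b p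
  proof (rule poly_eqI)
    show "coeff (eval_coeffs b p) i = coeff 0 i" for i
      using that by (cases "i \<le> degree p") (auto simp: Z_def coeff_eq_0)
  qed
  ultimately show ?thesis
    by (auto elim!: frequently_elim1)
qed

lemma deformable_SucI:
  assumes common_roots: "\<And>F \<epsilon>. finite F \<Longrightarrow> F \<subseteq> int_polyfun_poly n \<Longrightarrow>
      (\<And>p. p \<in> F \<Longrightarrow> poly (eval_coeffs a p) (a n) = 0) \<Longrightarrow> 0 < \<epsilon> \<Longrightarrow>
      \<exists>b \<beta>. (\<forall>i<n. \<bar>b i - a i\<bar> < \<epsilon>) \<and> \<bar>\<beta> - a n\<bar> < \<epsilon> \<and>
        (\<forall>p\<in>F. poly (eval_coeffs b p) \<beta> = 0) \<and> (b(n := \<beta>)) 0 \<noteq> a 0"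
  shows "deformable (Suc n) a"
  unfolding deformable_def
proof (intro allI impI)
  fix Z assume Z: "finite Z" "Z \<subseteq> int_polyfun (Suc n)" "\<forall>f\<in>Z. f a = 0"
  have "\<forall>f\<in>Z. \<exists>p. p \<in> int_polyfun_poly n \<and> (\<forall>x t. f (x(n := t)) = poly (eval_coeffs x p) t)"
    using Z(2) int_polyfun_Suc_decomp by blast
  then obtain P where P: "\<And>f. f \<in> Z \<Longrightarrow> P f \<in> int_polyfun_poly n"
    "\<And>f x t. f \<in> Z \<Longrightarrow> f (x(n := t)) = poly (eval_coeffs x (P f)) t"
    by (metis bchoice)
  have "poly (eval_coeffs a p) (a n) = 0" if "p \<in> P ` Z" for p
    using that P(2)[of _ a "a n"] Z(3) by auto
  then have roots: "\<exists>b \<beta>. (\<forall>i<n. \<bar>b i - a i\<bar> < \<epsilon>) \<and> \<bar>\<beta> - a n\<bar> < \<epsilon> \<and>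
      (\<forall>p\<in>P ` Z. poly (eval_coeffs b p) \<beta> = 0) \<and> (b(n := \<beta>)) 0 \<noteq> a 0" if "0 < \<epsilon>" for \<epsilon>
    using Z(1) P(1) that by (intro common_roots) auto
  show "\<exists>\<^sub>F b in coord_nhds (Suc n) a. (\<forall>f\<in>Z. f b = 0) \<and> (0 < Suc n \<longrightarrow> b 0 \<noteq> a 0)"
    unfolding frequently_coord_nhds
  proof (intro allI impI)
    fix \<epsilon> :: real assume "0 < \<epsilon>"
    then obtain b \<beta> where b: "\<forall>i<n. \<bar>b i - a i\<bar> < \<epsilon>" "\<bar>\<beta> - a n\<bar> < \<epsilon>"
      "\<forall>p\<in>P ` Z. poly (eval_coeffs b p) \<beta> = 0" "(b(n := \<beta>)) 0 \<noteq> a 0"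
      using roots by blast
    show "\<exists>b. (\<forall>i<Suc n. \<bar>b i - a i\<bar> < \<epsilon>) \<and> (\<forall>f\<in>Z. f b = 0) \<and> (0 < Suc n \<longrightarrow> b 0 \<noteq> a 0)"
    proof (intro exI[of _ "b(n := \<beta>)"] conjI allI impI ballI)
      show "\<bar>(b(n := \<beta>)) i - a i\<bar> < \<epsilon>" if "i < Suc n" for i
        using that b(1,2) by (cases "i = n") auto
      show "f (b(n := \<beta>)) = 0" if "f \<in> Z" for f
        using that b(3) P(2) by simp
    qed (use b(4) in simp)
  qed
qed

lemma deformable_Suc_transcendental:
  assumes "deformable n a"
    and transc: "\<And>p. p \<in> int_polyfun_poly n \<Longrightarrow> poly (eval_coeffs a p) (a n) = 0 \<Longrightarrow> eval_coeffs a p = 0"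
  shows "deformable (Suc n) a"
proof (rule deformable_SucI)
  fix F and \<epsilon> :: real
  assume F: "finite F" "F \<subseteq> int_polyfun_poly n" "\<And>p. p \<in> F \<Longrightarrow> poly (eval_coeffs a p) (a n) = 0"
    and "0 < \<epsilon>"
  have "\<exists>\<^sub>F b in coord_nhds n a. (\<forall>p\<in>F. eval_coeffs b p = 0) \<and> (0 < n \<longrightarrow> b 0 \<noteq> a 0)"
    using F transc by (intro deformable_eval_coeffs[OF \<open>deformable n a\<close>]) auto
  with \<open>0 < \<epsilon>\<close> obtain b where b: "\<forall>i<n. \<bar>b i - a i\<bar> < \<epsilon>" "\<forall>p\<in>F. eval_coeffs b p = 0"
    "0 < n \<longrightarrow> b 0 \<noteq> a 0"
    unfolding frequently_coord_nhds by blast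
  \<comment> \<open>The new coordinate is unconstrained; for \<open>n = 0\<close> it is the one that has to move.\<close>
  define \<beta> where "\<beta> = (if n = 0 then a n + \<epsilon> / 2 else a n)"
  show "\<exists>b \<beta>. (\<forall>i<n. \<bar>b i - a i\<bar> < \<epsilon>) \<and> \<bar>\<beta> - a n\<bar> < \<epsilon> \<and>
      (\<forall>p\<in>F. poly (eval_coeffs b p) \<beta> = 0) \<and> (b(n := \<beta>)) 0 \<noteq> a 0"
    using b \<open>0 < \<epsilon>\<close> by (intro exI[of _ b] exI[of _ \<beta>]) (auto simp: \<beta>_def)
qed

lemma deformable_Suc_algebraic:
  assumes "deformable n a" "0 < n"
    and "p \<in> int_polyfun_poly n" "eval_coeffs a p \<noteq> 0" "poly (eval_coeffs a p) (a n) = 0"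
  shows "deformable (Suc n) a"
proof (rule deformable_SucI)
  fix F and \<epsilon> :: real
  assume F: "finite F" "F \<subseteq> int_polyfun_poly n" "\<And>p. p \<in> F \<Longrightarrow> poly (eval_coeffs a p) (a n) = 0"
    and "0 < \<epsilon>"
  obtain m where m: "m \<in> int_polyfun_poly n" "0 < degree m" "coeff m (degree m) a \<noteq> 0"
    "poly (eval_coeffs a m) (a n) = 0" "poly (pderiv (eval_coeffs a m)) (a n) \<noteq> 0"
    and minimal: "\<And>q. q \<in> int_polyfun_poly n \<Longrightarrow> poly (eval_coeffs a q) (a n) = 0 \<Longrightarrow>
      degree q < degree m \<Longrightarrow> eval_coeffs a q = 0"
    using minimal_vanishing_poly[OF assms(3-5)] by blast
  \<comment> \<open>Pseudo-division by m: the remainders vanish at a by minimality of m, and at a common zero b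
    of the remainders with L b \<noteq> 0, every root of m is a common root of F.\<close>
  define L where "L = coeff m (degree m)"
  define R where "R p = snd (pseudo_divmod p m)" for p
  note R = pseudo_remainder_int_polyfun_poly[OF _ m(1,2), folded L_def R_def]
  have "eval_coeffs a (R p) = 0" if "p \<in> F" for p
    using that F R(1,2)[of p] R(3)[of p a "a n"] m(4) by (intro minimal) auto
  then have remainders: "\<exists>\<^sub>F b in coord_nhds n a. (\<forall>q\<in>R ` F. eval_coeffs b q = 0) \<and> b 0 \<noteq> a 0"
    using F R(1) \<open>0 < n\<close> deformable_eval_coeffs[OF \<open>deformable n a\<close>, of "R ` F"] by auto
  have "(L \<longlongrightarrow> L a) (coord_nhds n a)"
    using m(1) by (intro tendsto_int_polyfun) (simp add: L_def int_polyfun_poly_coeff)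
  then have lead: "\<forall>\<^sub>F b in coord_nhds n a. L b \<noteq> 0"
    using m(3) by (intro tendsto_imp_eventually_ne) (simp_all add: L_def)
  have root: "\<forall>\<^sub>F b in coord_nhds n a. \<exists>\<beta>. \<bar>\<beta> - a n\<bar> < \<epsilon> \<and> poly (eval_coeffs b m) \<beta> = 0"
    using m(1,4,5) \<open>0 < \<epsilon>\<close> by (rule eventually_root_near_simple_root)
  have close: "\<forall>\<^sub>F b in coord_nhds n a. \<forall>i<n. \<bar>b i - a i\<bar> < \<epsilon>"
    using \<open>0 < \<epsilon>\<close> by (auto simp: eventually_coord_nhds)
  obtain b \<beta> where b: "\<forall>q\<in>R ` F. eval_coeffs b q = 0" "b 0 \<noteq> a 0" "L b \<noteq> 0"
    "\<bar>\<beta> - a n\<bar> < \<epsilon>" "poly (eval_coeffs b m) \<beta> = 0" "\<forall>i<n. \<bar>b i - a i\<bar> < \<epsilon>"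
    using frequently_ex[OF frequently_eventually_frequently[OF remainders
        eventually_conj[OF lead eventually_conj[OF root close]]]]
    by blast
  have "poly (eval_coeffs b p) \<beta> = 0" if "p \<in> F" for p
    using R(3)[of p b \<beta>] that F(2) b(1,3,5) by auto
  then show "\<exists>b \<beta>. (\<forall>i<n. \<bar>b i - a i\<bar> < \<epsilon>) \<and> \<bar>\<beta> - a n\<bar> < \<epsilon> \<and>
      (\<forall>p\<in>F. poly (eval_coeffs b p) \<beta> = 0) \<and> (b(n := \<beta>)) 0 \<noteq> a 0"
    using b \<open>0 < n\<close> by (intro exI[of _ b] exI[of _ \<beta>]) auto
qed

lemma deformable_if_transcendental:
  assumes "\<not> algebraic (a 0)"
  shows "deformable n a"
proof (induction n)
  case 0
  show ?case
    by (rule deformable_0)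
next
  case (Suc n)
  show ?case
  proof (cases "\<exists>p\<in>int_polyfun_poly n. eval_coeffs a p \<noteq> 0 \<and> poly (eval_coeffs a p) (a n) = 0")
    case False
    then show ?thesis
      using deformable_Suc_transcendental[OF Suc] by blast
  next
    case True
    then obtain p where p: "p \<in> int_polyfun_poly n" "eval_coeffs a p \<noteq> 0" "poly (eval_coeffs a p) (a n) = 0"
      by blast
    have "n \<noteq> 0"
    proof
      assume "n = 0"
      then have "coeff (eval_coeffs a p) i \<in> \<int>" for i
        using p(1) by (simp add: int_polyfun_0_Ints int_polyfun_poly_coeff)
      with p(2,3) \<open>n = 0\<close> have "algebraic (a 0)"
        by (intro algebraicI) auto
      with assms show False ..
    qed
    then show ?thesis
      using deformable_Suc_algebraic[OF Suc _ p] by blast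
  qed
qed

section \<open>Transcendental numbers admit no adequate set\<close>

lemma partial_hom_from_relations:
  fixes a b :: "'i \<Rightarrow> 'a::field"
  assumes "inj_on a I" "A = a ` I"
    and one: "\<And>i. i \<in> I \<Longrightarrow> a i = 1 \<Longrightarrow> b i = 1"
    and add: "\<And>i j k. i \<in> I \<Longrightarrow> j \<in> I \<Longrightarrow> k \<in> I \<Longrightarrow> a i + a j = a k \<Longrightarrow> b i + b j = b k"
    and mult: "\<And>i j k. i \<in> I \<Longrightarrow> j \<in> I \<Longrightarrow> k \<in> I \<Longrightarrow> a i * a j = a k \<Longrightarrow> b i * b j = b k"
  shows "partial_hom A (\<lambda>y. b (the_inv_into I a y))"
proof -
  have b_a: "b (the_inv_into I a (a i)) = b i" if "i \<in> I" for i
    using the_inv_into_f_f[OF assms(1) that] by simp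
  show ?thesis
    unfolding partial_hom_def assms(2)
  proof (intro conjI ballI impI)
    assume "1 \<in> a ` I"
    then obtain i where "i \<in> I" "a i = 1"
      by (metis imageE)
    then show "b (the_inv_into I a 1) = 1"
      using one b_a by metis
  next
    fix u v assume "u \<in> a ` I" "v \<in> a ` I" "u + v \<in> a ` I"
    then obtain i j k where "i \<in> I" "j \<in> I" "k \<in> I" "u = a i" "v = a j" "u + v = a k"
      by (metis imageE)
    then show "b (the_inv_into I a (u + v)) = b (the_inv_into I a u) + b (the_inv_into I a v)"
      using add b_a by metis
  next
    fix u v assume "u \<in> a ` I" "v \<in> a ` I" "u * v \<in> a ` I"
    then obtain i j k where "i \<in> I" "j \<in> I" "k \<in> I" "u = a i" "v = a j" "u * v = a k"
      by (metis imageE)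
    then show "b (the_inv_into I a (u * v)) = b (the_inv_into I a u) * b (the_inv_into I a v)"
      using mult b_a by metis
  qed
qed

lemma enumerate_finite_set_from:
  assumes "finite A" "r \<in> A"
  obtains N and a :: "nat \<Rightarrow> 'a" where "0 < N" "inj_on a {..<N}" "A = a ` {..<N}" "a 0 = r"
proof -
  obtain xs where "distinct xs" "set xs = A - {r}"
    using finite_distinct_list[of "A - {r}"] assms(1) by blast
  then have "distinct (r # xs)" "set (r # xs) = A"
    using assms(2) by auto
  then show thesis
    by (intro that[of "length (r # xs)" "nth (r # xs)"])
      (auto simp: inj_on_nth set_conv_nth lessThan_def)
qed

definition coord_relations :: "nat \<Rightarrow> point \<Rightarrow> (point \<Rightarrow> real) set" where
  "coord_relations N a =
     (\<lambda>(i, j, k) x. x i + x j - x k) ` {(i, j, k). i < N \<and> j < N \<and> k < N \<and> a i + a j = a k} \<union>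
     (\<lambda>(i, j, k) x. x i * x j - x k) ` {(i, j, k). i < N \<and> j < N \<and> k < N \<and> a i * a j = a k} \<union>
     (\<lambda>i x. x i - 1) ` {i. i < N \<and> a i = 1}"

lemma finite_coord_relations: "finite (coord_relations N a)"
proof -
  have "finite {(i, j, k). i < N \<and> j < N \<and> k < N \<and> P i j k}" for P
    by (rule finite_subset[of _ "{..<N} \<times> {..<N} \<times> {..<N}"]) auto
  then show ?thesis
    by (simp add: coord_relations_def)
qed

lemma coord_relations_int_polyfun: "coord_relations N a \<subseteq> int_polyfun N"
proof -
  have "(\<lambda>x. 1) \<in> int_polyfun N"
    using int_polyfun_const[of 1] by simp
  then show ?thesis
    by (auto simp: coord_relations_def intro!: int_polyfun_diff int_polyfun_add int_polyfun_mult int_polyfun_coord)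
qed

lemma coord_relations_vanish: "f \<in> coord_relations N a \<Longrightarrow> f a = 0"
  by (auto simp: coord_relations_def)

lemma partial_hom_from_coord_relations:
  assumes "inj_on a {..<N}" "\<forall>f\<in>coord_relations N a. f b = 0"
  shows "partial_hom (a ` {..<N}) (\<lambda>y. b (the_inv_into {..<N} a y))"
proof (rule partial_hom_from_relations[OF assms(1) refl])
  show "b i = 1" if "i \<in> {..<N}" "a i = 1" for i
  proof -
    have "(\<lambda>x. x i - 1) \<in> coord_relations N a"
      using that unfolding coord_relations_def by blast
    then show ?thesis
      using assms(2) by fastforce
  qed
  show "b i + b j = b k" if "i \<in> {..<N}" "j \<in> {..<N}" "k \<in> {..<N}" "a i + a j = a k" for i j k
  proof -
    have "(\<lambda>x. x i + x j - x k) \<in> coord_relations N a"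
      using that unfolding coord_relations_def by (intro UnI1 image_eqI[where x = "(i, j, k)"]) auto
    then show ?thesis
      using assms(2) by fastforce
  qed
  show "b i * b j = b k" if "i \<in> {..<N}" "j \<in> {..<N}" "k \<in> {..<N}" "a i * a j = a k" for i j k
  proof -
    have "(\<lambda>x. x i * x j - x k) \<in> coord_relations N a"
      using that unfolding coord_relations_def by (intro UnI1 UnI2 image_eqI[where x = "(i, j, k)"]) auto
    then show ?thesis
      using assms(2) by fastforce
  qed
qed

lemma transcendental_not_adequate:
  fixes r :: real
  assumes "\<not> algebraic r"
  shows "\<not> adequate A r"
proof
  assume "adequate A r"
  then have "finite A" "r \<in> A" and fixes_r: "\<And>f. partial_hom A f \<Longrightarrow> f r = r"
    by (auto simp: adequate_iff_partial_hom)
  obtain N and a :: point where "0 < N" and a: "inj_on a {..<N}" "A = a ` {..<N}" and "a 0 = r"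
    using enumerate_finite_set_from[OF \<open>finite A\<close> \<open>r \<in> A\<close>] by blast
  have "deformable N a"
    using assms \<open>a 0 = r\<close> by (intro deformable_if_transcendental) simp
  moreover have "\<forall>f\<in>coord_relations N a. f a = 0"
    using coord_relations_vanish by blast
  ultimately have "\<exists>\<^sub>F b in coord_nhds N a. (\<forall>f\<in>coord_relations N a. f b = 0) \<and> (0 < N \<longrightarrow> b 0 \<noteq> a 0)"
    using finite_coord_relations coord_relations_int_polyfun by (simp add: deformable_def)
  then obtain b where b: "\<forall>f\<in>coord_relations N a. f b = 0" "b 0 \<noteq> a 0"
    using \<open>0 < N\<close> by (auto dest: frequently_ex)
  have "b (the_inv_into {..<N} a r) = r"
    using partial_hom_from_coord_relations[OF a(1) b(1)] a(2) by (intro fixes_r) simp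
  moreover have "the_inv_into {..<N} a r = 0"
    using a(1) \<open>0 < N\<close> \<open>a 0 = r\<close> by (intro the_inv_into_f_eq) auto
  ultimately show False
    using b(2) \<open>a 0 = r\<close> by simp
qed

theorem theorem6:
  shows "(tilde :: real set) = {x :: real. algebraic x}"
  using transcendental_not_adequate algebraic_imp_adequate by (auto simp: tilde_def)

end
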